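(* Let $\mu_e>0,\sigma^2>0$ and consider $N$ players, player $i$ having $n_i>0$ samples, federating with optimal fine-grained federation. Then the error of player $j$ is $$\frac{\mu_e/n_j}{V_j\cdot T}\left(1+\sigma^2\left(T-\frac{1}{V_j}\right)\right),$$ where $V_i=\sigma^2+\frac{\mu_e}{n_i}$ and $T=\sum_{i=1}^N\frac{1}{V_i}$.
   Context: In the mean-estimation model, $\mu_e$ is the average sampling noise and $\sigma^2$ the variance of players' true means. In fine-grained federation, player $j$ uses the weighted combination $\sum_i v_{ji}\hat\theta_i$ of all players' local estimates with real weights satisfying $\sum_{i=1}^N v_{ji}=1$; with weights $v_{j\cdot}$ its expected squared error is $$\mu_e\sum_{i=1}^N\frac{v_{ji}^2}{n_i}+\sigma^2\left(\sum_{i\neq j}v_{ji}^2+\Big(\sum_{i\neq j}v_{ji}\Big)^2\right).$$ Optimal fine-grained federation uses the weights minimizing this expression, and the player's error is this minimum value. *)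

theory Defs
  imports "HOL-Analysis.Analysis"
begin

text \<open>Players are indexed by 1..N; n i is the sample count of player i.
  Weights of player j are a function v :: nat => real (only values on 1..N matter).\<close>

definition fg_error :: "real \<Rightarrow> real \<Rightarrow> nat \<Rightarrow> (nat \<Rightarrow> real) \<Rightarrow> nat \<Rightarrow> (nat \<Rightarrow> real) \<Rightarrow> real" where
  "fg_error mu_e sigma2 N n j v =
     mu_e * (\<Sum>i=1..N. (v i)^2 / n i)
     + sigma2 * ((\<Sum>i\<in>{1..N}-{j}. (v i)^2) + (\<Sum>i\<in>{1..N}-{j}. v i)^2)"

definition fg_errors :: "real \<Rightarrow> real \<Rightarrow> nat \<Rightarrow> (nat \<Rightarrow> real) \<Rightarrow> nat \<Rightarrow> real set" where
  "fg_errors mu_e sigma2 N n j =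
     {fg_error mu_e sigma2 N n j v | v. (\<Sum>i=1..N. v i) = 1}"

definition opt_fg_error :: "real \<Rightarrow> real \<Rightarrow> nat \<Rightarrow> (nat \<Rightarrow> real) \<Rightarrow> nat \<Rightarrow> real" where
  "opt_fg_error mu_e sigma2 N n j = Inf (fg_errors mu_e sigma2 N n j)"

end

theory Submission
  imports Defs
begin

text \<open>Under the constraint \<open>\<Sum>i v i = 1\<close> the error of player j is the quadratic form
  \<open>\<Sum>i V i v_i\<^sup>2 - 2\<sigma>\<^sup>2 v_j + \<sigma>\<^sup>2\<close> with \<open>V i = \<sigma>\<^sup>2 + \<mu>_e / n i\<close>. For positive weights V,
  a vector w satisfying the Lagrange condition \<open>V i w_i = c + b_i\<close> minimises
  \<open>\<Sum>i V i v_i\<^sup>2 - 2 \<Sum>i b_i v_i\<close> on the affine hyperplane, because the form differs from its value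
  at w by the nonnegative term \<open>\<Sum>i V i (v_i - w_i)\<^sup>2\<close>. Here \<open>b = \<sigma>\<^sup>2 e_j\<close>, and the constraint fixes
  \<open>c = (1 - \<sigma>\<^sup>2 / V j) / T\<close>; evaluating the form at w gives the closed form.\<close>

definition point_quadratic :: "'a set \<Rightarrow> ('a \<Rightarrow> real) \<Rightarrow> real \<Rightarrow> 'a \<Rightarrow> ('a \<Rightarrow> real) \<Rightarrow> real" where
  "point_quadratic I V s j v = (\<Sum>i\<in>I. V i * (v i)^2) - 2 * s * v j + s"

lemma fg_error_eq_point_quadratic:
  assumes "j \<in> {1..N}" and "(\<Sum>i=1..N. v i) = 1"
  shows "fg_error mu_e sigma2 N n j v = point_quadratic {1..N} (\<lambda>i. sigma2 + mu_e / n i) sigma2 j v"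
proof -
  have others_sum: "(\<Sum>i\<in>{1..N}-{j}. v i) = 1 - v j"
    using sum.remove[of "{1..N}" j v] assms by simp
  have others_sq: "(\<Sum>i\<in>{1..N}-{j}. (v i)^2) = (\<Sum>i=1..N. (v i)^2) - (v j)^2"
    using sum.remove[of "{1..N}" j "\<lambda>i. (v i)^2"] assms(1) by simp
  have "(\<Sum>i=1..N. (sigma2 + mu_e / n i) * (v i)^2)
      = mu_e * (\<Sum>i=1..N. (v i)^2 / n i) + sigma2 * (\<Sum>i=1..N. (v i)^2)"
    by (simp add: sum_distrib_left sum.distrib[symmetric] algebra_simps)
  then show ?thesis
    unfolding fg_error_def point_quadratic_def others_sum others_sq
    by (simp add: power2_eq_square algebra_simps)
qed

lemma sum_if_eq_times:
  fixes f :: "'a \<Rightarrow> 'b::semiring_1"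
  assumes "finite I" and "j \<in> I"
  shows "(\<Sum>i\<in>I. (if i = j then s else 0) * f i) = s * f j"
proof -
  have "(\<Sum>i\<in>I. (if i = j then s else 0) * f i) = (\<Sum>i\<in>I. if i = j then s * f j else 0)"
    by (intro sum.cong) auto
  then show ?thesis
    using assms by simp
qed

lemma point_quadratic_eq_weighted_quadratic:
  assumes "finite I" and "j \<in> I"
  shows "point_quadratic I V s j v
    = (\<Sum>i\<in>I. V i * (v i)^2) - 2 * (\<Sum>i\<in>I. (if i = j then s else 0) * v i) + s"
  unfolding point_quadratic_def sum_if_eq_times[OF assms] by simp

lemma weighted_quadratic_at_stationary:
  fixes V b w :: "'a \<Rightarrow> real"
  assumes "\<forall>i\<in>I. V i * w i = c + b i" and "sum w I = 1"
  shows "(\<Sum>i\<in>I. V i * (w i)^2) = c + (\<Sum>i\<in>I. b i * w i)"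
proof -
  have "V i * (w i)^2 = c * w i + b i * w i" if "i \<in> I" for i
  proof -
    have "V i * (w i)^2 = (V i * w i) * w i" by (simp add: power2_eq_square)
    also have "\<dots> = c * w i + b i * w i" using assms(1) that by (simp add: distrib_right)
    finally show ?thesis .
  qed
  then have "(\<Sum>i\<in>I. V i * (w i)^2) = (\<Sum>i\<in>I. c * w i + b i * w i)"
    by (intro sum.cong) auto
  then show ?thesis
    using assms(2) by (simp add: sum.distrib sum_distrib_left[symmetric])
qed

lemma weighted_quadratic_min_at_stationary:
  fixes V b v w :: "'a \<Rightarrow> real"
  assumes "\<forall>i\<in>I. V i \<ge> 0" and "\<forall>i\<in>I. V i * w i = c + b i"
    and "sum w I = 1" and "sum v I = 1"
  shows "(\<Sum>i\<in>I. V i * (w i)^2) - 2 * (\<Sum>i\<in>I. b i * w i)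
       \<le> (\<Sum>i\<in>I. V i * (v i)^2) - 2 * (\<Sum>i\<in>I. b i * v i)"
proof -
  have "(\<Sum>i\<in>I. (V i * w i - b i) * (v i - w i)) = (\<Sum>i\<in>I. c * (v i - w i))"
    using assms(2) by (intro sum.cong) auto
  also have "\<dots> = 0"
    using assms(3,4) by (simp add: sum_distrib_left[symmetric] sum_subtractf)
  finally have cross: "(\<Sum>i\<in>I. (V i * w i - b i) * (v i - w i)) = 0" .
  have "(\<Sum>i\<in>I. V i * (v i)^2) - 2 * (\<Sum>i\<in>I. b i * v i)
      = (\<Sum>i\<in>I. V i * (v i)^2 - 2 * (b i * v i))"
    by (simp add: sum_subtractf sum_distrib_left)
  also have "\<dots> = (\<Sum>i\<in>I. V i * (w i)^2 - 2 * (b i * w i) + V i * (v i - w i)^2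
                        + 2 * ((V i * w i - b i) * (v i - w i)))"
    by (intro sum.cong) (simp_all add: power2_eq_square algebra_simps)
  also have "\<dots> = (\<Sum>i\<in>I. V i * (w i)^2) - 2 * (\<Sum>i\<in>I. b i * w i)
                 + (\<Sum>i\<in>I. V i * (v i - w i)^2)"
    using cross by (simp add: sum.distrib sum_subtractf sum_distrib_left[symmetric])
  finally show ?thesis
    using assms(1) sum_nonneg[of I "\<lambda>i. V i * (v i - w i)^2"] by simp
qed

lemma stationary_value_closed_form:
  fixes s T W :: real
  assumes "W \<noteq> 0" and "T \<noteq> 0"
  shows "(1 - s / W) / T + s - s * (((1 - s / W) / T + s) / W)
    = (W - s) / (W * T) * (1 + s * (T - 1 / W))"
  using assms by (simp add: field_simps)

lemma point_quadratic_minimum: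
  fixes V v :: "'a \<Rightarrow> real" and s :: real
  assumes "finite I" and "j \<in> I" and "\<forall>i\<in>I. V i > 0"
  defines "T \<equiv> (\<Sum>i\<in>I. 1 / V i)"
  defines "m \<equiv> (V j - s) / (V j * T) * (1 + s * (T - 1 / V j))"
  shows "\<exists>w. sum w I = 1 \<and> point_quadratic I V s j w = m"
    and "sum v I = 1 \<Longrightarrow> m \<le> point_quadratic I V s j v"
proof -
  let ?b = "\<lambda>i. if i = j then s else 0"
  define c where "c = (1 - s / V j) / T"
  define w where "w i = (c + ?b i) / V i" for i
  have T_pos: "T > 0"
    unfolding T_def using assms(1-3) by (intro sum_pos) auto
  have stationary: "\<forall>i\<in>I. V i * w i = c + ?b i"
    using assms(3) unfolding w_def by force
  have w_sum: "sum w I = 1"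
  proof -
    have "sum w I = (\<Sum>i\<in>I. c * (1 / V i) + ?b i * (1 / V i))"
      unfolding w_def by (intro sum.cong) (simp_all add: add_divide_distrib)
    also have "\<dots> = c * T + s / V j"
      using sum_if_eq_times[OF assms(1,2), of s "\<lambda>i. 1 / V i"]
      by (simp add: T_def sum.distrib sum_distrib_left)
    finally show ?thesis
      using T_pos unfolding c_def by simp
  qed
  have "point_quadratic I V s j w = c + s - s * w j"
    unfolding point_quadratic_eq_weighted_quadratic[OF assms(1,2)] sum_if_eq_times[OF assms(1,2)]
      weighted_quadratic_at_stationary[OF stationary w_sum] by simp
  also have "\<dots> = m"
  proof -
    have "V j \<noteq> 0" "T \<noteq> 0"
      using assms(2,3) T_pos by fastforce+
    from stationary_value_closed_form[OF this, of s] show ?thesis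
      unfolding m_def c_def w_def by simp
  qed
  finally have w_value: "point_quadratic I V s j w = m" .
  with w_sum show "\<exists>w. sum w I = 1 \<and> point_quadratic I V s j w = m"
    by blast
  show "m \<le> point_quadratic I V s j v" if "sum v I = 1"
  proof -
    have "\<forall>i\<in>I. V i \<ge> 0"
      using assms(3) by (simp add: less_imp_le)
    from weighted_quadratic_min_at_stationary[OF this stationary w_sum that] show ?thesis
      unfolding w_value[symmetric] point_quadratic_eq_weighted_quadratic[OF assms(1,2)] by simp
  qed
qed

theorem lemmaA1:
  fixes mu_e sigma2 :: real and N j :: nat and n :: "nat \<Rightarrow> real"
  assumes "mu_e > 0" and "sigma2 > 0"
    and "\<And>i. i \<in> {1..N} \<Longrightarrow> n i > 0"
    and "j \<in> {1..N}"
  defines "V \<equiv> (\<lambda>i. sigma2 + mu_e / n i)"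
  defines "T \<equiv> (\<Sum>i=1..N. 1 / V i)"
  shows "((mu_e / n j) / (V j * T) * (1 + sigma2 * (T - 1 / V j))) \<in> fg_errors mu_e sigma2 N n j
         \<and> (\<forall>e\<in>fg_errors mu_e sigma2 N n j.
               (mu_e / n j) / (V j * T) * (1 + sigma2 * (T - 1 / V j)) \<le> e)
         \<and> opt_fg_error mu_e sigma2 N n j
           = (mu_e / n j) / (V j * T) * (1 + sigma2 * (T - 1 / V j))"
proof -
  define E where "E = (mu_e / n j) / (V j * T) * (1 + sigma2 * (T - 1 / V j))"
  have V_pos: "\<forall>i\<in>{1..N}. V i > 0"
    using assms(1-3) unfolding V_def by (auto intro: add_pos_pos)
  have E_eq: "E = (V j - sigma2) / (V j * T) * (1 + sigma2 * (T - 1 / V j))"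
    unfolding E_def V_def by simp
  have error_eq: "fg_error mu_e sigma2 N n j v = point_quadratic {1..N} V sigma2 j v"
    if "sum v {1..N} = 1" for v
    using fg_error_eq_point_quadratic[OF assms(4)] that unfolding V_def by simp
  note minimum = point_quadratic_minimum[OF finite_atLeastAtMost assms(4) V_pos, where s = sigma2,
    folded T_def, folded E_eq]
  have E_mem: "E \<in> fg_errors mu_e sigma2 N n j"
    using minimum(1) error_eq unfolding fg_errors_def by force
  have E_le: "\<forall>e\<in>fg_errors mu_e sigma2 N n j. E \<le> e"
    using minimum(2) error_eq unfolding fg_errors_def by force
  have "opt_fg_error mu_e sigma2 N n j = E"
    unfolding opt_fg_error_def using E_mem E_le by (intro cInf_eq_minimum) auto
  with E_mem E_le show ?thesis
    unfolding E_def by simp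
qed

end
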